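(* Under complete randomization, suppose Assumption 1 holds and Assumptions 2 and 3 hold with order $k<T$. Let $\vec z'\in\{A,B\}^T$ and $t\in\{1,\dots,T\}$. Then $\bar Y_t(\vec z')$ is unbiasedly estimable if either (a) the hypothesis of Proposition S2 holds, i.e. ($t\le k$ and some $\vec z\in\mathcal{S}^{\mathrm{obs}}$ has $\vec z_{[1,t]}=\vec z'_{[1,t]}$) or ($t>k$ and some $\vec z\in\mathcal{S}^{\mathrm{obs}}$ has $\vec z_{[t-k+1,t]}=\vec z'_{[t-k+1,t]}$); or (b) $t\ge k$ and there exist $t'\ge k$, $t'\neq t$, and sequences $\vec z_1,\vec z_2,\vec z_3\in\{A,B\}^T$ with $\vec z_{1,[t'-k+1,t']}=\vec z'_{[t-k+1,t]}$ and $\vec z_{2,[t-k+1,t]}=\vec z_{3,[t'-k+1,t']}$, such that each of $\bar Y_{t'}(\vec z_1)$, $\bar Y_t(\vec z_2)$, $\bar Y_{t'}(\vec z_3)$ is unbiasedly estimable.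
   Context: Setup: $N$ units, treatments $A,B$, $T$ periods; sequences $\vec z\in\{A,B\}^T$, $\vec z_{[t_1,t_2]}=z_{t_1}\cdots z_{t_2}$. $\mathcal{S}^{\mathrm{obs}}$ implemented sequences; complete randomization with fixed positive group sizes $N_{\vec z}$; fixed potential outcomes $Y_{it}(\vec z)$; observed $Y_{it}=Y_{it}(\vec Z_i)$; randomness only from assignment. $\bar Y_t(\vec z)=N^{-1}\sum_iY_{it}(\vec z)$, $\widehat Y_t(\vec z)=N_{\vec z}^{-1}\sum_iY_{it}\mathbf1(\vec Z_i=\vec z)$. Assumption 1: $Y_{it}(\vec z)=Y_{it}(\vec z')$ whenever $\vec z_{[1,t]}=\vec z'_{[1,t]}$. Assumption 2 (order $k$): $Y_{it}(\vec z)=Y_{it}(\vec z')$ whenever $\vec z_{[\max(1,t-k+1),t]}=\vec z'_{[\max(1,t-k+1),t]}$; for $t\ge k$ write $Y_{it}(a)$, $a\in\{A,B\}^k$, for the common value over sequences with $\vec z_{[t-k+1,t]}=a$. Assumption 3 (order $k$): for all $a,b\in\{A,B\}^k$ and $t'>t\ge k$, $Y_{it}(a)-Y_{it}(b)=Y_{it'}(a)-Y_{it'}(b)$. A quantity is unbiasedly estimable if there is an estimator $\sum_{s}\sum_{\vec z\in\mathcal{S}^{\mathrm{obs}}}\tilde w_s(\vec z)\widehat Y_s(\vec z)$ with non-random weights whose expectation equals it for every finite population satisfying the assumptions. *)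

theory Defs
  imports Complex_Main "HOL-Library.FuncSet"
begin

datatype trt = A | B

text \<open>Treatment sequences in {A,B}^T are lists of length T; period j (1-based)
  is the list entry at index j-1.  Units are 0..<N, periods 1..T.
  Potential outcomes: Y i t z.\<close>

definition seqs :: "nat \<Rightarrow> trt list set" where
  "seqs T = {z. length z = T}"

definition agree :: "trt list \<Rightarrow> trt list \<Rightarrow> nat \<Rightarrow> nat \<Rightarrow> bool" where
  "agree z z' a b \<longleftrightarrow> (\<forall>j. a \<le> j \<and> j \<le> b \<longrightarrow> z ! (j - 1) = z' ! (j - 1))"

text \<open>window z_[t-k+1,t] as a word in {A,B}^k (for k \<le> t \<le> length z)\<close>
definition win :: "nat \<Rightarrow> trt list \<Rightarrow> nat \<Rightarrow> trt list" where
  "win k z t = take k (drop (t - k) z)"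

definition assump1 :: "nat \<Rightarrow> nat \<Rightarrow> (nat \<Rightarrow> nat \<Rightarrow> trt list \<Rightarrow> real) \<Rightarrow> bool" where
  "assump1 N T Y \<longleftrightarrow> (\<forall>i<N. \<forall>t\<in>{1..T}. \<forall>z\<in>seqs T. \<forall>z'\<in>seqs T.
      agree z z' 1 t \<longrightarrow> Y i t z = Y i t z')"

definition assump2 :: "nat \<Rightarrow> nat \<Rightarrow> nat \<Rightarrow> (nat \<Rightarrow> nat \<Rightarrow> trt list \<Rightarrow> real) \<Rightarrow> bool" where
  "assump2 N T k Y \<longleftrightarrow> (\<forall>i<N. \<forall>t\<in>{1..T}. \<forall>z\<in>seqs T. \<forall>z'\<in>seqs T.
      agree z z' (max 1 (t + 1 - k)) t \<longrightarrow> Y i t z = Y i t z')"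

text \<open>Assumption 3: Y_it(a) - Y_it(b) = Y_it'(a) - Y_it'(b); Y_it(a) is the common value
  of Y i t z over sequences z whose window ending at t is a.\<close>
definition assump3 :: "nat \<Rightarrow> nat \<Rightarrow> nat \<Rightarrow> (nat \<Rightarrow> nat \<Rightarrow> trt list \<Rightarrow> real) \<Rightarrow> bool" where
  "assump3 N T k Y \<longleftrightarrow> (\<forall>a b. length a = k \<longrightarrow> length b = k \<longrightarrow>
     (\<forall>t t'. k \<le> t \<longrightarrow> t < t' \<longrightarrow> t' \<le> T \<longrightarrow>
      (\<forall>i<N. \<forall>z1\<in>seqs T. \<forall>z2\<in>seqs T. \<forall>z3\<in>seqs T. \<forall>z4\<in>seqs T.
         win k z1 t = a \<longrightarrow> win k z2 t = b \<longrightarrow> win k z3 t' = a \<longrightarrow> win k z4 t' = b \<longrightarrow>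
         Y i t z1 - Y i t z2 = Y i t' z3 - Y i t' z4)))"

definition valid_pop :: "nat \<Rightarrow> nat \<Rightarrow> nat \<Rightarrow> (nat \<Rightarrow> nat \<Rightarrow> trt list \<Rightarrow> real) \<Rightarrow> bool" where
  "valid_pop N T k Y \<longleftrightarrow> assump1 N T Y \<and> assump2 N T k Y \<and> assump3 N T k Y"

text \<open>Complete randomization: all assignments of units to implemented sequences S with
  group sizes Nz, each equally likely.\<close>
definition assignments :: "nat \<Rightarrow> trt list set \<Rightarrow> (trt list \<Rightarrow> nat) \<Rightarrow> (nat \<Rightarrow> trt list) set" where
  "assignments N S Nz = {Z \<in> {0..<N} \<rightarrow>\<^sub>E S. \<forall>z\<in>S. card {i. i < N \<and> Z i = z} = Nz z}"

definition Ybar :: "nat \<Rightarrow> (nat \<Rightarrow> nat \<Rightarrow> trt list \<Rightarrow> real) \<Rightarrow> nat \<Rightarrow> trt list \<Rightarrow> real" where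
  "Ybar N Y t z = (\<Sum>i<N. Y i t z) / real N"

definition Yhat :: "nat \<Rightarrow> (trt list \<Rightarrow> nat) \<Rightarrow> (nat \<Rightarrow> nat \<Rightarrow> trt list \<Rightarrow> real)
    \<Rightarrow> (nat \<Rightarrow> trt list) \<Rightarrow> nat \<Rightarrow> trt list \<Rightarrow> real" where
  "Yhat N Nz Y Z t z = (\<Sum>i<N. if Z i = z then Y i t (Z i) else 0) / real (Nz z)"

definition expect :: "nat \<Rightarrow> trt list set \<Rightarrow> (trt list \<Rightarrow> nat) \<Rightarrow> ((nat \<Rightarrow> trt list) \<Rightarrow> real) \<Rightarrow> real" where
  "expect N S Nz f = (\<Sum>Z\<in>assignments N S Nz. f Z) / real (card (assignments N S Nz))"

definition estimable :: "nat \<Rightarrow> nat \<Rightarrow> nat \<Rightarrow> trt list set \<Rightarrow> (trt list \<Rightarrow> nat)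
    \<Rightarrow> ((nat \<Rightarrow> nat \<Rightarrow> trt list \<Rightarrow> real) \<Rightarrow> real) \<Rightarrow> bool" where
  "estimable N T k S Nz Q \<longleftrightarrow> (\<exists>w :: nat \<Rightarrow> trt list \<Rightarrow> real.
     \<forall>Y. valid_pop N T k Y \<longrightarrow>
       expect N S Nz (\<lambda>Z. \<Sum>s\<in>{1..T}. \<Sum>z\<in>S. w s z * Yhat N Nz Y Z s z) = Q Y)"

end

theory Submission
  imports Defs "HOL-Combinatorics.Permutations"
begin

text \<open>Relabelling units preserves complete randomization, so every unit receives an implemented
  sequence z with probability N_z / N and the group mean Yhat_t(z) is unbiased for Ybar_t(z).
  Estimability is preserved under sums, differences and equality on all admissible populations.
  In case (a), Assumption 2 gives Ybar_t(z') = Ybar_t(z) for the implemented z.  In case (b),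
  Assumption 3 transports the effect of switching from window z2 to window z' from period t to
  period t', so Ybar_t(z') = Ybar_t'(z1) + Ybar_t(z2) - Ybar_t'(z3).\<close>

lemma finite_seqs: "finite (seqs T)"
proof -
  have "finite (UNIV :: trt set)"
    by (rule finite_subset[of _ "{A, B}"]) (auto intro: trt.exhaust)
  then have "finite {xs. set xs \<subseteq> (UNIV :: trt set) \<and> length xs = T}"
    by (rule finite_lists_length_eq)
  then show ?thesis by (simp add: seqs_def)
qed

lemma finite_assignments: "finite S \<Longrightarrow> finite (assignments N S Nz)"
  by (rule finite_subset[of _ "{0..<N} \<rightarrow>\<^sub>E S"]) (auto simp: assignments_def finite_PiE)

text \<open>Units 0..<M are assigned in consecutive blocks, one block of size Nz z per sequence z.\<close>
lemma assignments_nonempty: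
  assumes "finite S"
  shows "assignments (sum Nz S) S Nz \<noteq> {}"
  using assms
proof (induction S rule: finite_induct)
  case empty
  have "(\<lambda>_. undefined) \<in> assignments 0 {} Nz" by (simp add: assignments_def)
  then show ?case by auto
next
  case (insert x F)
  define M where "M = sum Nz F"
  obtain Z' where Z': "Z' \<in> assignments M F Nz"
    using insert.IH unfolding M_def by blast
  define Z where "Z = (\<lambda>i. if i < M then Z' i else if i < M + Nz x then x else undefined)"
  have sum_insert: "sum Nz (insert x F) = M + Nz x" using insert.hyps by (simp add: M_def)
  have "Z \<in> {0..<M + Nz x} \<rightarrow>\<^sub>E insert x F"
    using Z' by (auto simp: Z_def assignments_def PiE_def Pi_def extensional_def)
  moreover have "card {i. i < M + Nz x \<and> Z i = z} = Nz z" if z: "z \<in> insert x F" for z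
  proof (cases "z = x")
    case True
    have "{i. i < M + Nz x \<and> Z i = z} = {M..<M + Nz x}"
      using Z' insert.hyps(2) True by (auto simp: Z_def assignments_def PiE_def Pi_def) (meson not_le)
    then show ?thesis using True by simp
  next
    case False
    then have "{i. i < M + Nz x \<and> Z i = z} = {i. i < M \<and> Z' i = z}"
      by (auto simp: Z_def)
    then show ?thesis using Z' False z by (simp add: assignments_def)
  qed
  ultimately have "Z \<in> assignments (M + Nz x) (insert x F) Nz"
    by (simp add: assignments_def)
  then show ?case unfolding sum_insert by blast
qed

lemma assignments_comp_permutes:
  assumes \<sigma>: "\<sigma> permutes {0..<N}" and Z: "Z \<in> assignments N S Nz"
  shows "Z \<circ> \<sigma> \<in> assignments N S Nz"
proof -
  have "Z \<circ> \<sigma> \<in> {0..<N} \<rightarrow>\<^sub>E S"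
    using Z permutes_in_image[OF \<sigma>] permutes_not_in[OF \<sigma>]
    by (auto simp: assignments_def PiE_def Pi_def extensional_def)
  moreover have "card {l. l < N \<and> (Z \<circ> \<sigma>) l = z} = card {l. l < N \<and> Z l = z}" for z
  proof -
    have "bij_betw \<sigma> {l \<in> {0..<N}. Z (\<sigma> l) = z} {l \<in> {0..<N}. Z l = z}"
      by (rule bij_betw_Collect[OF permutes_imp_bij[OF \<sigma>]]) simp
    then show ?thesis by (simp add: bij_betw_same_card)
  qed
  ultimately show ?thesis using Z by (simp add: assignments_def)
qed

lemma card_assignments_at_unit_eq:
  assumes "i < N" "j < N"
  shows "card {Z \<in> assignments N S Nz. Z i = z} = card {Z \<in> assignments N S Nz. Z j = z}"
proof -
  have \<tau>: "Transposition.transpose i j permutes {0..<N}"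
    using assms by (intro permutes_swap_id) auto
  have "bij_betw (\<lambda>Z. Z \<circ> Transposition.transpose i j)
      {Z \<in> assignments N S Nz. Z i = z} {Z \<in> assignments N S Nz. Z j = z}"
    by (rule bij_betw_byWitness[where f' = "\<lambda>Z. Z \<circ> Transposition.transpose i j"])
      (auto simp: assignments_comp_permutes[OF \<tau>] comp_assoc)
  then show ?thesis by (rule bij_betw_same_card)
qed

text \<open>Double counting of the pairs (unit, assignment) with the unit receiving z; by
  the previous lemma every unit contributes equally.\<close>
lemma card_assignments_at_unit:
  assumes fin: "finite S" and z: "z \<in> S" and i: "i < N"
  shows "N * card {Z \<in> assignments N S Nz. Z i = z} = card (assignments N S Nz) * Nz z"
proof -
  let ?G = "assignments N S Nz"
  have "N * card {Z \<in> ?G. Z i = z} = (\<Sum>l<N. card {Z \<in> ?G. Z l = z})"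
    using card_assignments_at_unit_eq[OF _ i] by simp
  also have "\<dots> = (\<Sum>Z\<in>?G. card {l \<in> {..<N}. Z l = z})"
    using sum.swap_restrict[of "{..<N}" ?G "\<lambda>_ _. 1::nat" "\<lambda>l Z. Z l = z"]
      finite_assignments[OF fin] by simp
  also have "\<dots> = (\<Sum>Z\<in>?G. Nz z)"
    using z by (intro sum.cong) (auto simp: assignments_def Collect_conj_eq lessThan_def)
  finally show ?thesis by simp
qed

lemma expect_Yhat:
  assumes fin: "finite S" and N: "sum Nz S = N" and z: "z \<in> S" and pos: "Nz z > 0"
  shows "expect N S Nz (\<lambda>Z. Yhat N Nz Y Z t z) = Ybar N Y t z"
proof -
  let ?G = "assignments N S Nz"
  have "card ?G > 0"
    using assignments_nonempty[OF fin, of Nz] finite_assignments[OF fin] N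
    by (simp add: card_gt_0_iff)
  have "N > 0"
    using member_le_sum[OF z _ fin, of Nz] N pos by simp
  have "(\<Sum>Z\<in>?G. Yhat N Nz Y Z t z)
      = (\<Sum>Z\<in>?G. \<Sum>i<N. if Z i = z then Y i t z else 0) / Nz z"
    unfolding Yhat_def sum_divide_distrib[symmetric]
    by (intro arg_cong2[where f = "(/)"] sum.cong) auto
  also have "\<dots> = (\<Sum>i<N. Y i t z * card {Z \<in> ?G. Z i = z}) / Nz z"
    using finite_assignments[OF fin]
    by (subst sum.swap) (simp add: sum.inter_filter[symmetric] mult.commute)
  also have "\<dots> = (\<Sum>i<N. Y i t z * (card ?G * Nz z / N)) / Nz z"
  proof -
    have "real (card {Z \<in> ?G. Z i = z}) = card ?G * Nz z / N" if "i < N" for i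
      using card_assignments_at_unit[OF fin z that, of Nz] \<open>N > 0\<close>
      by (simp add: field_simps flip: of_nat_mult)
    then show ?thesis by simp
  qed
  also have "\<dots> = (\<Sum>i<N. Y i t z) * (card ?G * Nz z / N) / Nz z"
    by (simp only: sum_distrib_right)
  also have "\<dots> = (\<Sum>i<N. Y i t z) / N * card ?G"
    using pos by (simp add: field_simps)
  finally show ?thesis
    using \<open>card ?G > 0\<close> by (simp add: expect_def Ybar_def)
qed

lemma expect_add: "expect N S Nz (\<lambda>Z. f Z + g Z) = expect N S Nz f + expect N S Nz g"
  by (simp add: expect_def sum.distrib add_divide_distrib)

lemma expect_diff: "expect N S Nz (\<lambda>Z. f Z - g Z) = expect N S Nz f - expect N S Nz g"
  by (simp add: expect_def sum_subtractf diff_divide_distrib)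

definition weighted_estimator ::
    "nat \<Rightarrow> nat \<Rightarrow> trt list set \<Rightarrow> (trt list \<Rightarrow> nat) \<Rightarrow> (nat \<Rightarrow> trt list \<Rightarrow> real)
      \<Rightarrow> (nat \<Rightarrow> nat \<Rightarrow> trt list \<Rightarrow> real) \<Rightarrow> (nat \<Rightarrow> trt list) \<Rightarrow> real" where
  "weighted_estimator N T S Nz w Y = (\<lambda>Z. \<Sum>s\<in>{1..T}. \<Sum>z\<in>S. w s z * Yhat N Nz Y Z s z)"

lemma estimable_iff_weighted_estimator:
  "estimable N T k S Nz Q \<longleftrightarrow>
    (\<exists>w. \<forall>Y. valid_pop N T k Y \<longrightarrow> expect N S Nz (weighted_estimator N T S Nz w Y) = Q Y)"
  unfolding estimable_def weighted_estimator_def ..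

lemma weighted_estimator_add:
  "weighted_estimator N T S Nz (\<lambda>s z. w1 s z + w2 s z) Y
    = (\<lambda>Z. weighted_estimator N T S Nz w1 Y Z + weighted_estimator N T S Nz w2 Y Z)"
  by (simp add: weighted_estimator_def distrib_right sum.distrib)

lemma weighted_estimator_diff:
  "weighted_estimator N T S Nz (\<lambda>s z. w1 s z - w2 s z) Y
    = (\<lambda>Z. weighted_estimator N T S Nz w1 Y Z - weighted_estimator N T S Nz w2 Y Z)"
  by (simp add: weighted_estimator_def left_diff_distrib sum_subtractf)

lemma estimable_add:
  assumes "estimable N T k S Nz Q1" "estimable N T k S Nz Q2"
  shows "estimable N T k S Nz (\<lambda>Y. Q1 Y + Q2 Y)"
proof -
  obtain w1 w2 where
    "\<forall>Y. valid_pop N T k Y \<longrightarrow> expect N S Nz (weighted_estimator N T S Nz w1 Y) = Q1 Y"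
    "\<forall>Y. valid_pop N T k Y \<longrightarrow> expect N S Nz (weighted_estimator N T S Nz w2 Y) = Q2 Y"
    using assms unfolding estimable_iff_weighted_estimator by blast
  then show ?thesis
    unfolding estimable_iff_weighted_estimator
    by (intro exI[of _ "\<lambda>s z. w1 s z + w2 s z"]) (simp add: weighted_estimator_add expect_add)
qed

lemma estimable_diff:
  assumes "estimable N T k S Nz Q1" "estimable N T k S Nz Q2"
  shows "estimable N T k S Nz (\<lambda>Y. Q1 Y - Q2 Y)"
proof -
  obtain w1 w2 where
    "\<forall>Y. valid_pop N T k Y \<longrightarrow> expect N S Nz (weighted_estimator N T S Nz w1 Y) = Q1 Y"
    "\<forall>Y. valid_pop N T k Y \<longrightarrow> expect N S Nz (weighted_estimator N T S Nz w2 Y) = Q2 Y"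
    using assms unfolding estimable_iff_weighted_estimator by blast
  then show ?thesis
    unfolding estimable_iff_weighted_estimator
    by (intro exI[of _ "\<lambda>s z. w1 s z - w2 s z"]) (simp add: weighted_estimator_diff expect_diff)
qed

lemma estimable_cong:
  assumes "estimable N T k S Nz Q" "\<And>Y. valid_pop N T k Y \<Longrightarrow> Q Y = Q' Y"
  shows "estimable N T k S Nz Q'"
  using assms unfolding estimable_def by auto

lemma sum_sum_of_bool_pair_mult:
  fixes X :: "'a \<Rightarrow> 'b \<Rightarrow> 'c::semiring_1"
  assumes "finite U" "finite V" "a \<in> U" "b \<in> V"
  shows "(\<Sum>s\<in>U. \<Sum>x\<in>V. of_bool (s = a \<and> x = b) * X s x) = X a b"
proof -
  have "V \<inter> {x. s = a \<and> x = b} = (if s = a then {b} else {})" for s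
    using assms(4) by auto
  then have "(\<Sum>x\<in>V. of_bool (s = a \<and> x = b) * X s x) = of_bool (s = a) * X s b" for s
    using assms(2) by simp
  moreover have "U \<inter> {s. s = a} = {a}"
    using assms(3) by auto
  ultimately show ?thesis
    using assms(1) by simp
qed

lemma estimable_Ybar_implemented:
  assumes "finite S" "sum Nz S = N" "z \<in> S" "Nz z > 0" "t \<in> {1..T}"
  shows "estimable N T k S Nz (\<lambda>Y. Ybar N Y t z)"
  unfolding estimable_iff_weighted_estimator
proof (intro exI[of _ "\<lambda>s x. of_bool (s = t \<and> x = z)"] allI impI)
  fix Y
  have "weighted_estimator N T S Nz (\<lambda>s x. of_bool (s = t \<and> x = z)) Y = (\<lambda>Z. Yhat N Nz Y Z t z)"
    unfolding weighted_estimator_def using assms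
    by (intro ext sum_sum_of_bool_pair_mult) auto
  then show "expect N S Nz (weighted_estimator N T S Nz (\<lambda>s x. of_bool (s = t \<and> x = z)) Y)
      = Ybar N Y t z"
    using expect_Yhat[OF assms(1-4)] by simp
qed

lemma Ybar_eq_if_window_agree:
  assumes "assump2 N T k Y" "z \<in> seqs T" "z' \<in> seqs T" "t \<in> {1..T}"
    and "agree z z' (max 1 (t + 1 - k)) t"
  shows "Ybar N Y t z = Ybar N Y t z'"
  using assms unfolding assump2_def Ybar_def by (auto intro!: sum.cong)

lemma length_win: "z \<in> seqs T \<Longrightarrow> k \<le> t \<Longrightarrow> t \<le> T \<Longrightarrow> length (win k z t) = k"
  by (simp add: win_def seqs_def)

lemma assump3D:
  assumes "assump3 N T k Y" "length a = k" "length b = k" "k \<le> t" "t < t'" "t' \<le> T" "i < N"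
    "x1 \<in> seqs T" "x2 \<in> seqs T" "x3 \<in> seqs T" "x4 \<in> seqs T"
    "win k x1 t = a" "win k x2 t = b" "win k x3 t' = a" "win k x4 t' = b"
  shows "Y i t x1 - Y i t x2 = Y i t' x3 - Y i t' x4"
  using assms unfolding assump3_def by blast

lemma assump3_effect_transport:
  assumes Y: "assump3 N T k Y" and i: "i < N"
    and t: "k \<le> t" "t \<le> T" and t': "k \<le> t'" "t' \<le> T" "t \<noteq> t'"
    and x: "x1 \<in> seqs T" "x2 \<in> seqs T" "x3 \<in> seqs T" "x4 \<in> seqs T"
    and w: "win k x1 t = win k x3 t'" "win k x2 t = win k x4 t'"
  shows "Y i t x1 - Y i t x2 = Y i t' x3 - Y i t' x4"
proof (cases "t < t'")
  case True
  show ?thesis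
    by (rule assump3D[OF Y length_win[OF x(1) t] length_win[OF x(2) t] t(1) True t'(2) i x
          refl refl w[symmetric]])
next
  case False
  then have "t' < t" using t' by simp
  have "Y i t' x3 - Y i t' x4 = Y i t x1 - Y i t x2"
    by (rule assump3D[OF Y length_win[OF x(3) t'(1,2)] length_win[OF x(4) t'(1,2)] t'(1)
          \<open>t' < t\<close> t(2) i x(3,4,1,2) refl refl w])
  then show ?thesis by simp
qed

lemma Ybar_transport:
  assumes Y: "assump3 N T k Y"
    and t: "k \<le> t" "t \<le> T" and t': "k \<le> t'" "t' \<le> T" "t \<noteq> t'"
    and z: "z' \<in> seqs T" "z1 \<in> seqs T" "z2 \<in> seqs T" "z3 \<in> seqs T"
    and w: "win k z1 t' = win k z' t" "win k z2 t = win k z3 t'"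
  shows "Ybar N Y t z' = Ybar N Y t' z1 + Ybar N Y t z2 - Ybar N Y t' z3"
proof -
  have "Y i t z' = Y i t' z1 + Y i t z2 - Y i t' z3" if "i < N" for i
    using assump3_effect_transport[OF Y that t t' z(1,3,2,4) w(1)[symmetric] w(2)] by simp
  then show ?thesis
    unfolding Ybar_def by (simp add: sum.distrib sum_subtractf add_divide_distrib diff_divide_distrib)
qed

theorem propositionS3:
  fixes N T k t :: nat and S :: "trt list set" and Nz :: "trt list \<Rightarrow> nat" and z' :: "trt list"
  assumes S_sub: "S \<subseteq> seqs T" and S_ne: "S \<noteq> {}"
    and Nz_pos: "\<forall>z\<in>S. Nz z > 0" and Nz_sum: "(\<Sum>z\<in>S. Nz z) = N"
    and k_pos: "1 \<le> k" and kT: "k < T"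
    and z': "z' \<in> seqs T" and t: "1 \<le> t" "t \<le> T"
    and cond: "((t \<le> k \<and> (\<exists>z\<in>S. agree z z' 1 t))
               \<or> (k < t \<and> (\<exists>z\<in>S. agree z z' (t - k + 1) t)))
             \<or> (k \<le> t \<and> (\<exists>t'. k \<le> t' \<and> t' \<le> T \<and> t' \<noteq> t \<and>
                 (\<exists>z1\<in>seqs T. \<exists>z2\<in>seqs T. \<exists>z3\<in>seqs T.
                    win k z1 t' = win k z' t \<and> win k z2 t = win k z3 t' \<and>
                    estimable N T k S Nz (\<lambda>Y. Ybar N Y t' z1) \<and>
                    estimable N T k S Nz (\<lambda>Y. Ybar N Y t z2) \<and>
                    estimable N T k S Nz (\<lambda>Y. Ybar N Y t' z3))))"
  shows "estimable N T k S Nz (\<lambda>Y. Ybar N Y t z')"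
proof -
  have fin: "finite S" using S_sub finite_seqs by (rule finite_subset)
  have window_start: "max 1 (t + 1 - k) = (if t \<le> k then 1 else t - k + 1)" by auto
  consider (implemented) z0 where "z0 \<in> S" "agree z0 z' (max 1 (t + 1 - k)) t"
    | (transported) t' z1 z2 z3 where "k \<le> t" "k \<le> t'" "t' \<le> T" "t' \<noteq> t"
        "z1 \<in> seqs T" "z2 \<in> seqs T" "z3 \<in> seqs T"
        "win k z1 t' = win k z' t" "win k z2 t = win k z3 t'"
        "estimable N T k S Nz (\<lambda>Y. Ybar N Y t' z1)"
        "estimable N T k S Nz (\<lambda>Y. Ybar N Y t z2)"
        "estimable N T k S Nz (\<lambda>Y. Ybar N Y t' z3)"
    using cond unfolding window_start by (cases "t \<le> k") auto
  then show ?thesis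
  proof cases
    case implemented
    have "estimable N T k S Nz (\<lambda>Y. Ybar N Y t z0)"
      using implemented fin Nz_sum Nz_pos t by (intro estimable_Ybar_implemented) auto
    then show ?thesis
    proof (rule estimable_cong)
      fix Y assume "valid_pop N T k Y"
      then show "Ybar N Y t z0 = Ybar N Y t z'"
        using implemented S_sub z' t by (intro Ybar_eq_if_window_agree) (auto simp: valid_pop_def)
    qed
  next
    case transported
    then have "estimable N T k S Nz (\<lambda>Y. Ybar N Y t' z1 + Ybar N Y t z2 - Ybar N Y t' z3)"
      by (intro estimable_diff estimable_add)
    then show ?thesis
    proof (rule estimable_cong)
      fix Y assume "valid_pop N T k Y"
      then show "Ybar N Y t' z1 + Ybar N Y t z2 - Ybar N Y t' z3 = Ybar N Y t z'"
        using transported z' t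
        by (intro Ybar_transport[symmetric]) (auto simp: valid_pop_def)
    qed
  qed
qed

end
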